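(* Let $d\ge2$ and let $\mathscr{D}_d$ be the distribution on $\mathcal{X}_d\times[-1,1]$ given by $\mathbf{x}\sim\mathrm{Unif}(\mathcal{X}_d)$, $y\mid\mathbf{x}=f_d(\mathbf{x})$, for some $f_d:\mathcal{X}_d\to[-1,1]$. Let $\delta>0$ and let $S=\{(\mathbf{x}_i,y_i)\}_{i=1}^m$ be drawn i.i.d. from $\mathscr{D}_d$. Then with probability at least $1-\delta$ there exists $\hat f\in\mathcal{N}_2$ interpolating $S$ (i.e. $\hat f(\mathbf{x}_i)=y_i$ for all $i$) with $R_2(\hat f)\le16\sqrt2\,|S|^{\frac{d+3}{d-1}}\delta^{-\frac{2}{d-1}}$.
   Context: $\mathcal{X}_d=\mathbb{S}^{d-1}\times\mathbb{S}^{d-1}\subset\mathbb{R}^{2d}$. $\mathcal{N}_2$ is the set of depth-two ReLU networks $f_\phi(\mathbf{x})=\sum_k a_k[\mathbf{w}_k^\top\mathbf{x}+b_k]_++c$ of arbitrary finite width, and $R_2(f)=\inf\{\|\phi\|^2/2:f_\phi=f\text{ on }\mathcal{X}_d\}$ with $\|\phi\|^2$ the sum of squares of all parameters. *)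

theory Defs
  imports "HOL-Probability.Probability"
begin

type_synonym 'n point = "(real^'n) \<times> (real^'n)"

text \<open>The input domain X_d = S^{d-1} x S^{d-1}, with d = CARD('n).\<close>
definition Xd :: "'n::finite point set" where
  "Xd = {(u, v). norm u = 1 \<and> norm v = 1}"

text \<open>Normalised (uniform) surface measure on the unit sphere S^{d-1}, defined as the
  cone measure: sigma(A) = vol{t x : x in A, 0 <= t <= 1} / vol(unit ball), i.e. the
  push-forward of the uniform distribution on the unit ball under x |-> x / |x|.\<close>
definition unif_sphere :: "(real^'n::finite) measure" where
  "unif_sphere = distr (uniform_measure lborel (cball 0 1)) borel (\<lambda>x. x /\<^sub>R norm x)"

definition unif_Xd :: "'n::finite point measure" where
  "unif_Xd = unif_sphere \<Otimes>\<^sub>M unif_sphere"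

type_synonym 'n params = "(real \<times> 'n point \<times> real) list \<times> real"

definition relu :: "real \<Rightarrow> real" where
  "relu t = max t 0"

definition netfun :: "'n::finite params \<Rightarrow> 'n point \<Rightarrow> real" where
  "netfun \<phi> x = (\<Sum>(a, w, b) \<leftarrow> fst \<phi>. a * relu (inner w x + b)) + snd \<phi>"

definition param_sqnorm :: "'n::finite params \<Rightarrow> real" where
  "param_sqnorm \<phi> = (\<Sum>(a, w, b) \<leftarrow> fst \<phi>. a\<^sup>2 + (norm w)\<^sup>2 + b\<^sup>2) + (snd \<phi>)\<^sup>2"

definition N2 :: "('n::finite point \<Rightarrow> real) set" where
  "N2 = {f. \<exists>\<phi>. f = netfun \<phi>}"

definition R2 :: "('n::finite point \<Rightarrow> real) \<Rightarrow> real" where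
  "R2 f = Inf {param_sqnorm \<phi> / 2 | \<phi>. \<forall>x\<in>Xd. netfun \<phi> x = f x}"

end

(* Points whose first sphere components are pairwise at distance at least r can be interpolated
   by a network with one ReLU unit per point, unit k being supported on the cap of radius r around
   the k-th point; this costs 3m/r^2. A cap of radius r has normalised surface measure at most
   2^d r^(d-1), so by a union bound over the m(m-1)/2 pairs an i.i.d. uniform sample is
   r-separated with probability at least 1 - delta as soon as 2^d r^(d-1) = 2 delta / m^2, and
   this choice of r gives the stated bound. *)

theory Submission
  imports Defs
begin

lemma measure_lborel_scaleR_vimage:
  fixes C :: "'a::euclidean_space set"
  assumes "0 < c" and [measurable]: "C \<in> sets borel"
  shows "measure lborel C = c ^ DIM('a) * measure lborel ((\<lambda>x. c *\<^sub>R x) -` C)"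
proof -
  have "emeasure lborel C = emeasure (density (distr lborel borel (\<lambda>x. 0 + c *\<^sub>R x)) (\<lambda>_. \<bar>c\<bar> ^ DIM('a))) C"
    using lborel_affine[of c "0::'a"] assms(1) by simp
  also have "\<dots> = ennreal (c ^ DIM('a)) * emeasure lborel ((\<lambda>x. c *\<^sub>R x) -` C)"
    using assms by (simp add: emeasure_density nn_integral_cmult_indicator emeasure_distr)
  finally show ?thesis
    using assms(1) by (simp add: measure_def enn2real_mult)
qed

(* Shrinking the cone by the factor 1 - r scales its volume by (1 - r)^d, and the points it loses
   are within r of their projection to the sphere, hence within 2r of u; as 1 - (1 - r)^d >= r,
   this bounds the volume of the cone. *)
lemma measure_cone_cap_le:
  fixes u :: "'a::euclidean_space"
  assumes r: "0 < r" "r < 1"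
  shows "measure lborel ({z. dist (z /\<^sub>R norm z) u < r} \<inter> cball 0 1)
           \<le> unit_ball_vol DIM('a) * 2 ^ DIM('a) * r ^ (DIM('a) - 1)"
proof -
  let ?d = "DIM('a)"
  define K where "K \<rho> = {z. dist (z /\<^sub>R norm z) u < r} \<inter> cball 0 \<rho>" for \<rho>
  have K_sets[measurable]: "K \<rho> \<in> sets borel" for \<rho>
    unfolding K_def by measurable
  have "(\<lambda>x. (1 - r) *\<^sub>R x) -` K (1 - r) = K 1"
  proof -
    have "((1 - r) *\<^sub>R x) /\<^sub>R norm ((1 - r) *\<^sub>R x) = x /\<^sub>R norm x" for x :: 'a
      using r by (cases "x = 0") auto
    moreover have "norm ((1 - r) *\<^sub>R x) \<le> 1 - r \<longleftrightarrow> norm x \<le> 1" for x :: 'a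
      using r by (simp add: mult_le_cancel_right1)
    ultimately show ?thesis
      unfolding K_def by (auto simp del: norm_scaleR scaleR_scaleR)
  qed
  then have shrink: "measure lborel (K (1 - r)) = (1 - r) ^ ?d * measure lborel (K 1)"
    using measure_lborel_scaleR_vimage[of "1 - r" "K (1 - r)"] r by simp
  have "K 1 \<subseteq> K (1 - r) \<union> cball u (2 * r)"
  proof
    fix z assume z: "z \<in> K 1"
    show "z \<in> K (1 - r) \<union> cball u (2 * r)"
    proof (cases "norm z \<le> 1 - r")
      case False
      then have "z \<noteq> 0" and "norm z \<le> 1" using r z by (auto simp: K_def)
      then have "dist z (z /\<^sub>R norm z) = norm ((1 - 1 / norm z) *\<^sub>R z)"
        by (simp add: dist_norm algebra_simps divide_inverse)
      also have "\<dots> = (1 / norm z - 1) * norm z"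
        using \<open>z \<noteq> 0\<close> \<open>norm z \<le> 1\<close> by (simp add: abs_if field_simps)
      finally have "dist z (z /\<^sub>R norm z) = 1 - norm z"
        using \<open>z \<noteq> 0\<close> by (simp add: algebra_simps)
      then show ?thesis
        using False z dist_triangle[of z u "z /\<^sub>R norm z"] by (auto simp: K_def dist_commute)
    qed (use z in \<open>auto simp: K_def\<close>)
  qed
  then have "measure lborel (K 1) \<le> measure lborel (K (1 - r) \<union> cball u (2 * r))"
    by (intro measure_mono_fmeasurable fmeasurableI emeasure_bounded_finite)
       (auto simp: K_def bounded_Un intro: bounded_subset[of "cball 0 1"])
  also have "\<dots> \<le> (1 - r) ^ ?d * measure lborel (K 1) + unit_ball_vol ?d * (2 * r) ^ ?d"
    using measure_Un_le[of "K (1 - r)" lborel "cball u (2 * r)"] r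
    by (simp add: shrink content_cball)
  finally have "measure lborel (K 1) * (1 - (1 - r) ^ ?d) \<le> unit_ball_vol ?d * (2 * r) ^ ?d"
    by (simp add: algebra_simps)
  moreover have "r \<le> 1 - (1 - r) ^ ?d"
    using power_decreasing[of 1 ?d "1 - r"] r by (simp add: Suc_le_eq)
  ultimately have "measure lborel (K 1) * r \<le> unit_ball_vol ?d * (2 * r) ^ ?d"
    by (meson measure_nonneg mult_left_mono order_trans)
  also have "\<dots> = unit_ball_vol ?d * 2 ^ ?d * r ^ (?d - 1) * r"
    by (simp add: power_mult_distrib power_eq_if[of r ?d])
  finally show ?thesis
    using r by (simp add: K_def)
qed

lemma sets_unif_sphere [simp, measurable_cong]: "sets unif_sphere = sets borel"
  unfolding unif_sphere_def by simp

lemma space_unif_sphere [simp]: "space unif_sphere = UNIV"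
  unfolding unif_sphere_def by simp

lemma prob_space_unif_sphere: "prob_space (unif_sphere :: (real^'n::finite) measure)"
  unfolding unif_sphere_def
proof (intro prob_space.prob_space_distr prob_space_uniform_measure)
  have "unit_ball_vol CARD('n) \<noteq> 0"
    using unit_ball_vol_pos[of "real CARD('n)"] by linarith
  then show "emeasure lborel (cball (0::real^'n) 1) \<noteq> 0"
    using emeasure_cball[of 1 "0::real^'n"] by simp
  show "emeasure lborel (cball (0::real^'n) 1) \<noteq> \<infinity>"
    using emeasure_lborel_cball_finite[of "0::real^'n" 1] by simp
qed simp_all

lemma measure_unif_sphere:
  fixes B :: "(real^'n::finite) set"
  assumes [measurable]: "B \<in> sets borel"
  shows "measure unif_sphere B
           = measure lborel ({z. z /\<^sub>R norm z \<in> B} \<inter> cball 0 1) / unit_ball_vol CARD('n)"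
proof -
  let ?K = "{z. z /\<^sub>R norm z \<in> B} \<inter> cball (0::real^'n) 1"
  have [measurable]: "(\<lambda>x::real^'n. x /\<^sub>R norm x) \<in> borel_measurable borel"
    by measurable
  have "emeasure unif_sphere B = emeasure lborel ?K / emeasure lborel (cball (0::real^'n) 1)"
    unfolding unif_sphere_def by (subst emeasure_distr) (auto simp: Int_commute vimage_def)
  also have "\<dots> = ennreal (measure lborel ?K) / ennreal (unit_ball_vol CARD('n))"
    using emeasure_bounded_finite[of ?K] emeasure_cball[of 1 "0::real^'n"]
    by (simp add: emeasure_eq_ennreal_measure bounded_Int)
  also have "\<dots> = ennreal (measure lborel ?K / unit_ball_vol CARD('n))"
    using unit_ball_vol_pos[of "real CARD('n)"] by (simp add: divide_ennreal)
  finally show ?thesis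
    by (simp add: measure_def)
qed

lemma measure_unif_sphere_ball_le:
  fixes u :: "real^'n::finite"
  assumes "0 < r"
  shows "measure unif_sphere (ball u r) \<le> 2 ^ CARD('n) * r ^ (CARD('n) - 1)"
proof (cases "r < 1")
  case True
  have "measure lborel ({z. z /\<^sub>R norm z \<in> ball u r} \<inter> cball 0 1)
          \<le> unit_ball_vol CARD('n) * 2 ^ CARD('n) * r ^ (CARD('n) - 1)"
    using measure_cone_cap_le[OF assms True, of u] by (simp add: dist_commute)
  then show ?thesis
    by (simp add: measure_unif_sphere divide_le_eq mult_ac)
next
  case False
  interpret prob_space "unif_sphere :: (real^'n) measure"
    by (rule prob_space_unif_sphere)
  have "measure unif_sphere (ball u r) \<le> 1 * 1"
    by simp
  also have "\<dots> \<le> 2 ^ CARD('n) * r ^ (CARD('n) - 1)"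
    using False by (intro mult_mono one_le_power) auto
  finally show ?thesis .
qed

lemma AE_unif_sphere_norm: "AE u in unif_sphere. norm (u :: real^'n::finite) = 1"
proof -
  have "AE x in lborel. x \<in> cball 0 1 \<longrightarrow> norm (x /\<^sub>R norm x :: real^'n) = 1"
    using AE_lborel_singleton[of "0::real^'n"] by eventually_elim simp
  then have "AE x in uniform_measure lborel (cball 0 1). norm (x /\<^sub>R norm x :: real^'n) = 1"
    by (rule AE_uniform_measureI[rotated]) simp
  then show ?thesis
    unfolding unif_sphere_def by (subst AE_distr_iff) simp_all
qed

lemma sets_unif_Xd [measurable_cong]: "sets unif_Xd = sets (borel \<Otimes>\<^sub>M borel)"
  unfolding unif_Xd_def by (rule sets_pair_measure_cong) simp_all

lemma space_unif_Xd [simp]: "space unif_Xd = UNIV"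
  unfolding unif_Xd_def by (simp add: space_pair_measure)

lemma prob_space_unif_Xd: "prob_space unif_Xd"
  unfolding unif_Xd_def by (intro prob_space_pair prob_space_unif_sphere)

lemma AE_unif_Xd_in_Xd: "AE x in unif_Xd. x \<in> (Xd :: 'n::finite point set)"
proof -
  interpret S: prob_space "unif_sphere :: (real^'n) measure"
    by (rule prob_space_unif_sphere)
  interpret pair_prob_space "unif_sphere :: (real^'n) measure" "unif_sphere :: (real^'n) measure" ..
  show ?thesis
    unfolding unif_Xd_def
  proof (rule AE_pair_measure)
    show "{x \<in> space (unif_sphere \<Otimes>\<^sub>M unif_sphere). x \<in> Xd} \<in> sets (unif_sphere \<Otimes>\<^sub>M unif_sphere)"
      unfolding Xd_def by measurable
    show "AE u in unif_sphere. AE v in unif_sphere. (u, v) \<in> Xd"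
      using AE_unif_sphere_norm by eventually_elim (use AE_unif_sphere_norm in \<open>simp add: Xd_def\<close>)
  qed
qed

definition close_pairs :: "real \<Rightarrow> ('n::finite point \<times> 'n point) set" where
  "close_pairs r = {(p, q). dist (fst p) (fst q) < r}"

lemma sets_close_pairs [measurable]: "close_pairs r \<in> sets (unif_Xd \<Otimes>\<^sub>M unif_Xd)"
proof -
  have "{pq \<in> space (unif_Xd \<Otimes>\<^sub>M unif_Xd). dist (fst (fst pq)) (fst (snd pq)) < r}
          \<in> sets (unif_Xd \<Otimes>\<^sub>M (unif_Xd :: 'n::finite point measure))"
    by measurable
  then show ?thesis
    by (simp add: close_pairs_def space_pair_measure case_prod_unfold)
qed

lemma measure_unif_Xd_close_pairs_le:
  assumes "0 < r"
  shows "measure (unif_Xd \<Otimes>\<^sub>M unif_Xd) (close_pairs r :: ('n::finite point \<times> 'n point) set)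
           \<le> 2 ^ CARD('n) * r ^ (CARD('n) - 1)"
proof -
  interpret X: prob_space "unif_Xd :: 'n point measure"
    by (rule prob_space_unif_Xd)
  interpret pair_prob_space "unif_Xd :: 'n point measure" "unif_Xd :: 'n point measure" ..
  interpret S: prob_space "unif_sphere :: (real^'n) measure"
    by (rule prob_space_unif_sphere)
  let ?C = "close_pairs r :: ('n point \<times> 'n point) set"
  have slice: "emeasure unif_Xd (Pair p -` ?C) = ennreal (measure unif_sphere (ball (fst p) r))" for p
  proof -
    have "Pair p -` ?C = ball (fst p) r \<times> UNIV"
      by (auto simp: close_pairs_def)
    then show ?thesis
      unfolding unif_Xd_def
      using S.emeasure_pair_measure_Times[of "ball (fst p) r" unif_sphere UNIV] S.emeasure_space_1
      by (simp add: S.emeasure_eq_measure)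
  qed
  have "emeasure (unif_Xd \<Otimes>\<^sub>M unif_Xd) ?C = (\<integral>\<^sup>+p. emeasure unif_Xd (Pair p -` ?C) \<partial>unif_Xd)"
    by (rule X.emeasure_pair_measure_alt[OF sets_close_pairs])
  also have "\<dots> \<le> (\<integral>\<^sup>+p. ennreal (2 ^ CARD('n) * r ^ (CARD('n) - 1)) \<partial>(unif_Xd :: 'n point measure))"
    unfolding slice by (intro nn_integral_mono ennreal_leI measure_unif_sphere_ball_le assms)
  finally show ?thesis
    using X.emeasure_space_1 assms by (simp add: P.emeasure_eq_measure)
qed

lemma distr_PiM_Pair_components:
  assumes M: "\<And>k. k \<in> I \<Longrightarrow> prob_space (M k)" and ij: "i \<in> I" "j \<in> I" "i \<noteq> j"
  shows "distr (PiM I M) (M i \<Otimes>\<^sub>M M j) (\<lambda>x. (x i, x j)) = M i \<Otimes>\<^sub>M M j"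
proof (rule sym, rule pair_measure_eqI)
  show "sigma_finite_measure (M i)" "sigma_finite_measure (M j)"
    using M ij by (auto intro: prob_space_imp_sigma_finite)
  have meas: "(\<lambda>x. (x i, x j)) \<in> PiM I M \<rightarrow>\<^sub>M M i \<Otimes>\<^sub>M M j"
    using ij by (intro measurable_Pair measurable_component_singleton)
  fix A B assume A: "A \<in> sets (M i)" and B: "B \<in> sets (M j)"
  let ?F = "\<lambda>k. if k = i then A else B"
  have "(\<lambda>x. (x i, x j)) -` (A \<times> B) \<inter> space (PiM I M) = prod_emb I M {i, j} (PiE {i, j} ?F)"
    using ij by (auto simp: prod_emb_def space_PiM PiE_iff)
  then have "emeasure (distr (PiM I M) (M i \<Otimes>\<^sub>M M j) (\<lambda>x. (x i, x j))) (A \<times> B)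
               = emeasure (PiM I M) (prod_emb I M {i, j} (PiE {i, j} ?F))"
    using A B meas by (simp add: emeasure_distr)
  also have "\<dots> = (\<Prod>k\<in>{i, j}. emeasure (M k) (?F k))"
    using M ij A B by (intro emeasure_PiM_emb) auto
  finally show "emeasure (M i) A * emeasure (M j) B
                  = emeasure (distr (PiM I M) (M i \<Otimes>\<^sub>M M j) (\<lambda>x. (x i, x j))) (A \<times> B)"
    using ij by simp
qed simp

lemma measure_PiM_pair_events_le:
  fixes M :: "'a measure" and S :: "('a \<times> 'a) set" and m :: nat
  assumes M: "prob_space M" and S: "S \<in> sets (M \<Otimes>\<^sub>M M)"
  defines "P \<equiv> PiM {..<m} (\<lambda>_. M)"
  shows "measure P (\<Union>j<m. \<Union>i<j. {x \<in> space P. (x i, x j) \<in> S})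
           \<le> measure (M \<Otimes>\<^sub>M M) S * (real m * (real m - 1) / 2)"
proof -
  let ?E = "\<lambda>i j. {x \<in> space P. (x i, x j) \<in> S}"
  have meas: "(\<lambda>x. (x i, x j)) \<in> P \<rightarrow>\<^sub>M M \<Otimes>\<^sub>M M" if "i < m" "j < m" for i j
    unfolding P_def using that by (intro measurable_Pair measurable_component_singleton) auto
  have E_sets: "?E i j \<in> sets P" if "i < m" "j < m" for i j
    using measurable_sets[OF meas[OF that] S] by (simp add: vimage_def Int_def conj_commute)
  have E_measure: "measure P (?E i j) = measure (M \<Otimes>\<^sub>M M) S" if "i < j" "j < m" for i j
  proof -
    have "measure P (?E i j) = measure (distr P (M \<Otimes>\<^sub>M M) (\<lambda>x. (x i, x j))) S"
      using that S meas[of i j] by (simp add: measure_distr vimage_def Int_def conj_commute)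
    also have "distr P (M \<Otimes>\<^sub>M M) (\<lambda>x. (x i, x j)) = M \<Otimes>\<^sub>M M"
      unfolding P_def using that M by (intro distr_PiM_Pair_components) auto
    finally show ?thesis .
  qed
  have "measure P (\<Union>j<m. \<Union>i<j. ?E i j) \<le> (\<Sum>j<m. measure P (\<Union>i<j. ?E i j))"
    using E_sets by (intro measure_UNION_le) auto
  also have "\<dots> \<le> (\<Sum>j<m. \<Sum>i<j. measure P (?E i j))"
    using E_sets by (intro sum_mono measure_UNION_le) auto
  also have "\<dots> = (\<Sum>j<m. real j * measure (M \<Otimes>\<^sub>M M) S)"
    using E_measure by simp
  also have "\<dots> = measure (M \<Otimes>\<^sub>M M) S * (real m * (real m - 1) / 2)"
    by (induction m) (simp_all add: algebra_simps)
  finally show ?thesis .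
qed

lemma PiM_event_avoiding_pairs:
  fixes M :: "'a measure" and S :: "('a \<times> 'a) set" and m :: nat
  assumes M: "prob_space M" and S[measurable]: "S \<in> sets (M \<Otimes>\<^sub>M M)"
    and [measurable]: "G \<in> sets M"
    and G: "AE x in M. x \<in> G"
  defines "P \<equiv> PiM {..<m} (\<lambda>_. M)"
  obtains A where "A \<in> sets P"
    and "1 - measure (M \<Otimes>\<^sub>M M) S * (real m * (real m - 1) / 2) \<le> measure P A"
    and "\<And>x i. x \<in> A \<Longrightarrow> i < m \<Longrightarrow> x i \<in> G"
    and "\<And>x i j. x \<in> A \<Longrightarrow> i < j \<Longrightarrow> j < m \<Longrightarrow> (x i, x j) \<notin> S"
proof -
  interpret P: prob_space P
    unfolding P_def by (intro prob_space_PiM M)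
  define bad where "bad = (\<Union>j<m. \<Union>i<j. {x \<in> space P. (x i, x j) \<in> S})"
  define A where "A = {x \<in> space P. (\<forall>i<m. x i \<in> G) \<and> (\<forall>j<m. \<forall>i<j. (x i, x j) \<notin> S)}"
  have bad_sets: "bad \<in> sets P"
    unfolding bad_def P_def by measurable
  have A_sets: "A \<in> sets P"
    unfolding A_def P_def by measurable
  have "AE x in P. \<forall>i\<in>{..<m}. x i \<in> G"
    unfolding P_def by (intro AE_finite_allI AE_PiM_component) (use M G in auto)
  then have "AE x in P. x \<in> A \<longleftrightarrow> x \<in> space P - bad"
    by eventually_elim (auto simp: A_def bad_def)
  then have "measure P A = measure P (space P - bad)"
    by (rule measure_eq_AE) (use A_sets bad_sets in auto)
  also have "\<dots> = 1 - measure P bad"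
    using bad_sets by (rule P.prob_compl)
  finally have "measure P A = 1 - measure P bad" .
  moreover have "measure P bad \<le> measure (M \<Otimes>\<^sub>M M) S * (real m * (real m - 1) / 2)"
    unfolding bad_def P_def using M S by (rule measure_PiM_pair_events_le)
  ultimately have "1 - measure (M \<Otimes>\<^sub>M M) S * (real m * (real m - 1) / 2) \<le> measure P A"
    by linarith
  with A_sets show ?thesis
    by (rule that) (auto simp: A_def)
qed

lemma unif_Xd_sample_separated_event:
  fixes m :: nat and r :: real
  assumes "0 < r"
  defines "P \<equiv> PiM {..<m} (\<lambda>_. unif_Xd :: 'n::finite point measure)"
  obtains A where "A \<in> sets P"
    and "1 - 2 ^ CARD('n) * r ^ (CARD('n) - 1) * (real m * (real m - 1) / 2) \<le> measure P A"
    and "\<And>xs i. xs \<in> A \<Longrightarrow> i < m \<Longrightarrow> xs i \<in> Xd"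
    and "\<And>xs i j. xs \<in> A \<Longrightarrow> i < j \<Longrightarrow> j < m \<Longrightarrow> r \<le> dist (fst (xs i)) (fst (xs j))"
proof -
  have Xd_sets: "Xd \<in> sets (unif_Xd :: 'n point measure)"
  proof -
    have "{x \<in> space (unif_Xd :: 'n point measure). norm (fst x) = 1 \<and> norm (snd x) = 1} \<in> sets unif_Xd"
      by measurable
    then show ?thesis
      by (simp add: Xd_def case_prod_beta)
  qed
  obtain A where A: "A \<in> sets P"
    "1 - measure (unif_Xd \<Otimes>\<^sub>M unif_Xd) (close_pairs r :: ('n point \<times> 'n point) set)
           * (real m * (real m - 1) / 2) \<le> measure P A"
    "\<And>xs i. xs \<in> A \<Longrightarrow> i < m \<Longrightarrow> xs i \<in> Xd"
    "\<And>xs i j. xs \<in> A \<Longrightarrow> i < j \<Longrightarrow> j < m \<Longrightarrow> (xs i, xs j) \<notin> close_pairs r"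
    using PiM_event_avoiding_pairs[OF prob_space_unif_Xd sets_close_pairs[of r] Xd_sets AE_unif_Xd_in_Xd,
                               where m=m]
    unfolding P_def by blast
  have "0 \<le> real m * (real m - 1) / 2"
    by (cases m) auto
  then have "measure (unif_Xd \<Otimes>\<^sub>M unif_Xd) (close_pairs r :: ('n point \<times> 'n point) set) * (real m * (real m - 1) / 2)
               \<le> 2 ^ CARD('n) * r ^ (CARD('n) - 1) * (real m * (real m - 1) / 2)"
    by (intro mult_right_mono measure_unif_Xd_close_pairs_le assms)
  with A show ?thesis
    by (intro that[of A]) (auto simp: close_pairs_def not_less)
qed

lemma inner_eq_dist_if_norm_1:
  fixes u v :: "'a::real_inner"
  assumes "norm u = 1" "norm v = 1"
  shows "inner u v = 1 - (dist u v)\<^sup>2 / 2"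
  using assms unfolding norm_eq_1
  by (simp add: dist_norm power2_norm_eq_inner inner_diff inner_commute field_simps)

(* Since inner u v = 1 - (dist u v)^2 / 2 for unit vectors, unit k is active at a unit vector v
   exactly when dist v (u k) < r, and it outputs y k at v = u k. *)
definition bump_net :: "real \<Rightarrow> (nat \<Rightarrow> real^'n) \<Rightarrow> (nat \<Rightarrow> real) \<Rightarrow> nat \<Rightarrow> 'n::finite params" where
  "bump_net r u y m =
     (map (\<lambda>k. (sqrt 2 / r * y k, ((sqrt 2 / r) *\<^sub>R u k, 0), sqrt 2 / r * (r\<^sup>2 / 2 - 1))) [0..<m], 0)"

lemma netfun_bump_net:
  "netfun (bump_net r u y m) x
     = (\<Sum>k<m. sqrt 2 / r * y k * relu (sqrt 2 / r * (inner (u k) (fst x) + r\<^sup>2 / 2 - 1)))"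
  by (cases x) (simp add: netfun_def bump_net_def inner_Pair interv_sum_list_conv_sum_set_nat
                          atLeast0LessThan algebra_simps)

lemma netfun_bump_net_interpolates:
  assumes u: "\<And>k. k < m \<Longrightarrow> norm (u k) = 1"
    and sep: "\<And>i j. i < j \<Longrightarrow> j < m \<Longrightarrow> r \<le> dist (u i) (u j)"
    and "0 < r" "j < m" "fst x = u j"
  shows "netfun (bump_net r u y m) x = y j"
proof -
  have inactive: "relu (sqrt 2 / r * (inner (u k) (u j) + r\<^sup>2 / 2 - 1)) = 0"
    if "k < m" "k \<noteq> j" for k
  proof -
    have "r \<le> dist (u k) (u j)"
      using sep[of k j] sep[of j k] that \<open>j < m\<close> by (cases "k < j") (auto simp: dist_commute)
    then have "r\<^sup>2 \<le> (dist (u k) (u j))\<^sup>2"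
      using \<open>0 < r\<close> by (intro power_mono) auto
    then have "inner (u k) (u j) + r\<^sup>2 / 2 - 1 \<le> 0"
      using inner_eq_dist_if_norm_1[OF u u] that \<open>j < m\<close> by simp
    with \<open>0 < r\<close> have "sqrt 2 / r * (inner (u k) (u j) + r\<^sup>2 / 2 - 1) \<le> 0"
      by (intro mult_nonneg_nonpos) auto
    then show ?thesis
      by (simp add: relu_def)
  qed
  have "netfun (bump_net r u y m) x
          = sqrt 2 / r * y j * relu (sqrt 2 / r * (inner (u j) (u j) + r\<^sup>2 / 2 - 1))"
    unfolding netfun_bump_net \<open>fst x = u j\<close> using \<open>j < m\<close> inactive
    by (subst sum.remove[of _ j]) (auto intro!: sum.neutral)
  also have "\<dots> = y j"
    using u[OF \<open>j < m\<close>] \<open>0 < r\<close>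
    by (simp add: relu_def power2_norm_eq_inner[symmetric] power2_eq_square field_simps)
  finally show ?thesis .
qed

lemma param_sqnorm_bump_net_le:
  fixes u :: "nat \<Rightarrow> real^'n::finite"
  assumes u: "\<And>k. k < m \<Longrightarrow> norm (u k) = 1" and y: "\<And>k. k < m \<Longrightarrow> \<bar>y k\<bar> \<le> 1"
    and r: "0 < r" "r \<le> 2"
  shows "param_sqnorm (bump_net r u y m) \<le> 6 * m / r\<^sup>2"
proof -
  have unit_cost: "(sqrt 2 / r * y k)\<^sup>2 + (norm ((sqrt 2 / r) *\<^sub>R u k, 0 :: real^'n))\<^sup>2
                     + (sqrt 2 / r * (r\<^sup>2 / 2 - 1))\<^sup>2 \<le> 6 / r\<^sup>2" if "k < m" for k
  proof -
    have sq: "(sqrt 2 / r * t)\<^sup>2 = 2 / r\<^sup>2 * t\<^sup>2" for t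
      by (simp add: power_mult_distrib power_divide)
    have "(norm ((sqrt 2 / r) *\<^sub>R u k, 0 :: real^'n))\<^sup>2 = 2 / r\<^sup>2 * 1"
      using u[OF that] by (simp add: norm_Pair power_mult_distrib power_divide)
    then have "(sqrt 2 / r * y k)\<^sup>2 + (norm ((sqrt 2 / r) *\<^sub>R u k, 0 :: real^'n))\<^sup>2
                 + (sqrt 2 / r * (r\<^sup>2 / 2 - 1))\<^sup>2 = 2 / r\<^sup>2 * ((y k)\<^sup>2 + 1 + (r\<^sup>2 / 2 - 1)\<^sup>2)"
      unfolding sq by (simp add: distrib_left)
    also have "\<dots> \<le> 2 / r\<^sup>2 * 3"
    proof -
      have "r\<^sup>2 \<le> 2\<^sup>2"
        using r by (intro power_mono) auto
      then have "(r\<^sup>2 / 2 - 1)\<^sup>2 \<le> 1"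
        using abs_square_le_1[of "r\<^sup>2 / 2 - 1"] by (simp add: abs_le_iff)
      moreover have "(y k)\<^sup>2 \<le> 1"
        using y[OF that] abs_square_le_1 by blast
      ultimately show ?thesis
        by (intro mult_left_mono) auto
    qed
    finally show ?thesis
      by simp
  qed
  have "param_sqnorm (bump_net r u y m)
          = (\<Sum>k<m. (sqrt 2 / r * y k)\<^sup>2 + (norm ((sqrt 2 / r) *\<^sub>R u k, 0 :: real^'n))\<^sup>2
                     + (sqrt 2 / r * (r\<^sup>2 / 2 - 1))\<^sup>2)"
    by (simp add: param_sqnorm_def bump_net_def interv_sum_list_conv_sum_set_nat atLeast0LessThan)
  also have "\<dots> \<le> (\<Sum>k<m. 6 / r\<^sup>2)"
    by (intro sum_mono unit_cost) simp
  finally show ?thesis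
    by (simp add: mult.commute)
qed

lemma R2_le_param_sqnorm:
  assumes "\<forall>x\<in>Xd. netfun \<phi> x = f x"
  shows "R2 f \<le> param_sqnorm \<phi> / 2"
  unfolding R2_def
proof (rule cInf_lower)
  show "param_sqnorm \<phi> / 2 \<in> {param_sqnorm \<psi> / 2 | \<psi>. \<forall>x\<in>Xd. netfun \<psi> x = f x}"
    using assms by blast
  have "0 \<le> param_sqnorm \<psi>" for \<psi> :: "'a params"
    unfolding param_sqnorm_def by (intro add_nonneg_nonneg sum_list_nonneg) auto
  then show "bdd_below {param_sqnorm \<psi> / 2 | \<psi>. \<forall>x\<in>Xd. netfun \<psi> x = f x}"
    by (intro bdd_belowI[of _ 0]) fastforce
qed

lemma netfun_in_N2: "netfun \<phi> \<in> N2"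
  unfolding N2_def by blast

lemma exists_interpolating_net:
  fixes xs :: "nat \<Rightarrow> 'n::finite point" and f :: "'n point \<Rightarrow> real"
  assumes "\<And>k. k < m \<Longrightarrow> xs k \<in> Xd" and "\<forall>x\<in>Xd. f x \<in> {-1..1}"
    and "\<And>i j. i < j \<Longrightarrow> j < m \<Longrightarrow> r \<le> dist (fst (xs i)) (fst (xs j))"
    and "0 < r" "r \<le> 2"
  shows "\<exists>fh\<in>N2. (\<forall>i<m. fh (xs i) = f (xs i)) \<and> R2 fh \<le> 3 * real m / r\<^sup>2"
proof -
  define \<phi> where "\<phi> = bump_net r (\<lambda>k. fst (xs k)) (\<lambda>k. f (xs k)) m"
  have fst_norm: "norm (fst (xs k)) = 1" and f_bound: "\<bar>f (xs k)\<bar> \<le> 1" if "k < m" for k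
    using assms(1)[OF that] assms(2) by (auto simp: abs_le_iff) (simp add: Xd_def mem_Times_iff)
  have "\<forall>i<m. netfun \<phi> (xs i) = f (xs i)"
    unfolding \<phi>_def using fst_norm assms(3,4) by (auto intro: netfun_bump_net_interpolates)
  moreover have "R2 (netfun \<phi>) \<le> 3 * real m / r\<^sup>2"
    using R2_le_param_sqnorm[of \<phi> "netfun \<phi>"] fst_norm f_bound assms(4,5)
      param_sqnorm_bump_net_le[of m "\<lambda>k. fst (xs k)" "\<lambda>k. f (xs k)" r]
    by (simp add: \<phi>_def)
  ultimately show ?thesis
    using netfun_in_N2 by blast
qed

lemma power_half_root_powr:
  fixes q :: real and n :: nat
  assumes "0 < n" "0 < q"
  shows "2 ^ Suc n * (q powr (1 / real n) / 2) ^ n = 2 * q"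
proof -
  have "(q powr (1 / real n)) ^ n = q"
    using assms by (simp add: powr_power)
  then show ?thesis
    by (simp add: power_divide)
qed

lemma divide_half_powr_square_eq:
  fixes \<delta> m e :: real
  assumes "0 < \<delta>" "0 < m"
  shows "3 * m / ((\<delta> / m\<^sup>2) powr e / 2)\<^sup>2 = 12 * m powr (1 + 4 * e) * \<delta> powr (- 2 * e)"
proof -
  have sq: "(x powr a)\<^sup>2 = x powr (2 * a)" if "0 < x" for x a :: real
    using that by (simp add: powr_power)
  have "m\<^sup>2 = m powr 2"
    using assms by (simp add: powr_numeral)
  then have "(m\<^sup>2) powr e = m powr (2 * e)"
    by (simp add: powr_powr)
  then have "((\<delta> / m\<^sup>2) powr e / 2)\<^sup>2 = \<delta> powr (2 * e) / m powr (4 * e) / 4"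
    using assms by (simp add: powr_divide power_divide sq)
  then show ?thesis
    using assms by (simp add: powr_add powr_minus field_simps)
qed

lemma exists_sample_radius:
  fixes d m :: nat and \<delta> :: real
  assumes d: "2 \<le> d" and \<delta>: "0 < \<delta>" "\<delta> < 1"
  obtains r where "0 < r" "r \<le> 2" "2 ^ d * r ^ (d - 1) * (real m * (real m - 1) / 2) \<le> \<delta>"
    and "3 * real m / r\<^sup>2
           \<le> 16 * sqrt 2 * real m powr ((real d + 3) / (real d - 1)) * \<delta> powr (- 2 / (real d - 1))"
proof (cases "m = 0")
  case True
  then show ?thesis
    using \<delta> by (intro that[of 1]) auto
next
  case False
  define q where "q = \<delta> / (real m)\<^sup>2"
  define r where "r = q powr (1 / real (d - 1)) / 2"
  have q: "0 < q" "q \<le> 1"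
    using \<delta> False by (auto simp: q_def field_simps intro: order_trans[OF _ one_le_power])
  have r: "0 < r" "r \<le> 2"
    using q powr_le1[of "1 / real (d - 1)" q] by (auto simp: r_def)
  moreover have "2 ^ d * r ^ (d - 1) * (real m * (real m - 1) / 2) \<le> \<delta>"
  proof -
    have "2 ^ d * r ^ (d - 1) = 2 * q"
      using power_half_root_powr[of "d - 1" q] d q by (simp add: r_def Suc_diff_Suc numeral_2_eq_2)
    then show ?thesis
      using \<delta> False r by (simp add: q_def field_simps power2_eq_square)
  qed
  moreover have "3 * real m / r\<^sup>2
      \<le> 16 * sqrt 2 * real m powr ((real d + 3) / (real d - 1)) * \<delta> powr (- 2 / (real d - 1))"
  proof -
    have "3 * real m / r\<^sup>2
            = 12 * real m powr ((real d + 3) / (real d - 1)) * \<delta> powr (- 2 / (real d - 1))"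
      using divide_half_powr_square_eq[of \<delta> "real m" "1 / real (d - 1)"] \<delta> False d
      by (simp add: r_def q_def of_nat_diff field_simps)
    moreover have "(12::real) \<le> 16 * sqrt 2"
      using real_sqrt_ge_one[of 2] by linarith
    ultimately show ?thesis
      by (simp add: mult_right_mono)
  qed
  ultimately show ?thesis
    by (rule that)
qed

theorem lemma18:
  fixes f :: "'n::finite point \<Rightarrow> real" and \<delta> :: real and m :: nat
  assumes "CARD('n) \<ge> 2"
    and "\<forall>x\<in>Xd. f x \<in> {-1..1}"
    and "\<delta> > 0"
  shows "\<exists>A \<in> sets (PiM {..<m} (\<lambda>_. unif_Xd)).
           measure (PiM {..<m} (\<lambda>_. unif_Xd)) A \<ge> 1 - \<delta> \<and>
           (\<forall>xs\<in>A. \<exists>fh\<in>N2. (\<forall>i<m. fh (xs i) = f (xs i)) \<and>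
              R2 fh \<le> 16 * sqrt 2 * real m powr ((real CARD('n) + 3) / (real CARD('n) - 1))
                         * \<delta> powr (- 2 / (real CARD('n) - 1)))"
proof (cases "\<delta> < 1")
  case False
  then show ?thesis
    by (intro bexI[of _ "{}"]) auto
next
  case True
  let ?P = "PiM {..<m} (\<lambda>_. unif_Xd :: 'n point measure)"
  let ?bound = "16 * sqrt 2 * real m powr ((real CARD('n) + 3) / (real CARD('n) - 1))
                  * \<delta> powr (- 2 / (real CARD('n) - 1))"
  obtain r where r: "0 < r" "r \<le> 2"
      "2 ^ CARD('n) * r ^ (CARD('n) - 1) * (real m * (real m - 1) / 2) \<le> \<delta>"
      "3 * real m / r\<^sup>2 \<le> ?bound"
    using exists_sample_radius[OF assms(1,3) True] .
  obtain A where A: "A \<in> sets ?P"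
      "1 - 2 ^ CARD('n) * r ^ (CARD('n) - 1) * (real m * (real m - 1) / 2) \<le> measure ?P A"
      "\<And>xs i. xs \<in> A \<Longrightarrow> i < m \<Longrightarrow> xs i \<in> Xd"
      "\<And>xs i j. xs \<in> A \<Longrightarrow> i < j \<Longrightarrow> j < m \<Longrightarrow> r \<le> dist (fst (xs i)) (fst (xs j))"
    using unif_Xd_sample_separated_event[OF r(1)] by blast
  show ?thesis
  proof (intro bexI[OF _ A(1)] conjI ballI)
    show "1 - \<delta> \<le> measure ?P A"
      using A(2) r(3) by linarith
    fix xs assume "xs \<in> A"
    have "\<exists>fh\<in>N2. (\<forall>i<m. fh (xs i) = f (xs i)) \<and> R2 fh \<le> 3 * real m / r\<^sup>2"
      by (rule exists_interpolating_net) (use \<open>xs \<in> A\<close> A(3,4) assms(2) r(1,2) in auto)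
    with r(4) show "\<exists>fh\<in>N2. (\<forall>i<m. fh (xs i) = f (xs i)) \<and> R2 fh \<le> ?bound"
      by (blast intro: order_trans)
  qed
qed

end
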